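(* Let $\beta\in(0,1)$, let $G=(V,E)$ be an $n$-vertex graph, let $P_1\subseteq[\lfloor\beta n\rfloor]$ with $|P_1|=l\ge 1$ and $t_1:=\max P_1$, let $p_1<p_2$ be positions in $[\lfloor\beta n\rfloor]\setminus P_1$ with $t_1<p_1$, and let $S\subseteq[\lfloor\beta n\rfloor]\setminus(P_1\cup\{p_2\})$ with $p_1\in S$. Let $\pi$ be a uniformly random bijection $[n]\to V$ and $\sigma\colon S\to V$ any injective map. Then the conditional probability, given $\pi|_S=\sigma$, that $\pi(p_1)$ and $\pi(p_2)$ are adjacent and both alive in step $t_1+1$ is at most $\frac{1}{e\cdot l\cdot(1-\beta)}$.
   Context: Given a bijection $\pi\colon[n]\to V$, the sequential greedy algorithm processes steps $t=1,\dots,n$: initially all vertices are alive; in step $t$, if $\pi(t)$ is alive, it is added to the independent set and $\pi(t)$ together with all its neighbors become dead for all later steps; if $\pi(t)$ is dead, nothing happens. A vertex is alive in step $t$ if it has not become dead in any step $t'<t$. *)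

theory Defs
  imports "HOL-Probability.Probability"
begin

definition simple_graph :: "'a set \<Rightarrow> ('a \<Rightarrow> 'a \<Rightarrow> bool) \<Rightarrow> bool" where
  "simple_graph V E \<longleftrightarrow> finite V \<and> (\<forall>u v. E u v \<longrightarrow> E v u)
     \<and> (\<forall>u. \<not> E u u) \<and> (\<forall>u v. E u v \<longrightarrow> u \<in> V \<and> v \<in> V)"

definition bijections :: "nat \<Rightarrow> 'a set \<Rightarrow> (nat \<Rightarrow> 'a) set" where
  "bijections n V = {\<pi>. \<pi> \<in> {1..n} \<rightarrow>\<^sub>E V \<and> bij_betw \<pi> {1..n} V}"

fun greedy_dead :: "('a \<Rightarrow> 'a \<Rightarrow> bool) \<Rightarrow> (nat \<Rightarrow> 'a) \<Rightarrow> nat \<Rightarrow> 'a set" where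
  "greedy_dead E \<pi> 0 = {}"
| "greedy_dead E \<pi> (Suc t) =
     (if \<pi> (Suc t) \<notin> greedy_dead E \<pi> t
      then greedy_dead E \<pi> t \<union> {\<pi> (Suc t)} \<union> {v. E (\<pi> (Suc t)) v}
      else greedy_dead E \<pi> t)"

text \<open>Vertex v is alive in step t (t >= 1): not dead in any step t' < t.\<close>
definition alive :: "('a \<Rightarrow> 'a \<Rightarrow> bool) \<Rightarrow> (nat \<Rightarrow> 'a) \<Rightarrow> nat \<Rightarrow> 'a \<Rightarrow> bool" where
  "alive E \<pi> t v \<longleftrightarrow> v \<notin> greedy_dead E \<pi> (t - 1)"

end

theory Submission
  imports Defs "HOL-Combinatorics.Transposition"
begin

text \<open>
  Write \<open>u = \<sigma> p1\<close>. For a bijection \<open>\<pi>\<close> extending \<open>\<sigma>\<close> and a step \<open>k\<close>, let \<open>a\<close> be the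
  number of neighbours of \<open>u\<close> that are still alive after step \<open>k\<close> and sit at a position
  \<open>> k\<close> outside \<open>S\<close>, let \<open>j\<close> be the number of steps of \<open>P1\<close> after \<open>k\<close>, and consider the
  potential \<open>max {y (1 - y/n)^j | y \<le> a}\<close> (zero once \<open>u\<close> is dead). Its expectation never
  increases: conditioning is invariant under transposing two free positions, so the vertex
  processed at a step of \<open>P1\<close> may be taken uniformly from the free positions; with
  probability at least \<open>a/n\<close> it is an alive neighbour of \<open>u\<close> and kills \<open>u\<close>, and otherwise
  \<open>a\<close> does not grow. Initially the potential is at most \<open>max y (1 - y/n)^l \<le> n/(e l)\<close>.
  After step \<open>t1\<close> (where \<open>j = 0\<close>) the event asks \<open>\<pi> p2\<close>, again uniform over at least
  \<open>(1 - \<beta>) n\<close> free positions, to be one of the \<open>a\<close> alive neighbours.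
\<close>

lemma greedy_dead_cong:
  "(\<And>i. 1 \<le> i \<Longrightarrow> i \<le> k \<Longrightarrow> \<pi> i = \<pi>' i) \<Longrightarrow> greedy_dead E \<pi> k = greedy_dead E \<pi>' k"
  by (induction k) simp_all

lemma greedy_dead_subset_Suc: "greedy_dead E \<pi> k \<subseteq> greedy_dead E \<pi> (Suc k)"
  by auto

lemma greedy_dead_transpose:
  "k < a \<Longrightarrow> k < b \<Longrightarrow> greedy_dead E (\<pi> \<circ> Transposition.transpose a b) k = greedy_dead E \<pi> k"
  by (rule greedy_dead_cong) (simp add: transpose_eq_iff)

definition decay_peak :: "nat \<Rightarrow> nat \<Rightarrow> nat \<Rightarrow> real" where
  "decay_peak n j x = Max ((\<lambda>y. real y * (1 - real y / real n) ^ j) ` {..x})"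

lemma decay_peak_ge: "y \<le> x \<Longrightarrow> real y * (1 - real y / real n) ^ j \<le> decay_peak n j x"
  unfolding decay_peak_def by (intro Max_ge) auto

lemma decay_peak_nonneg: "0 \<le> decay_peak n j x"
  using decay_peak_ge[of 0 x n j] by simp

lemma decay_peak_attained: "\<exists>y\<le>x. decay_peak n j x = real y * (1 - real y / real n) ^ j"
proof -
  have "decay_peak n j x \<in> (\<lambda>y. real y * (1 - real y / real n) ^ j) ` {..x}"
    unfolding decay_peak_def by (intro Max_in) auto
  then show ?thesis by auto
qed

lemma decay_peak_mono: "x \<le> x' \<Longrightarrow> decay_peak n j x \<le> decay_peak n j x'"
  using decay_peak_attained[of x n j] decay_peak_ge[of _ x' n j] by force

lemma decay_peak_0 [simp]: "decay_peak n 0 x = real x"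
  using decay_peak_attained[of x n 0] decay_peak_ge[of x x n 0] by force

lemma decay_peak_Suc:
  assumes "x \<le> n"
  shows "(1 - real x / real n) * decay_peak n j x \<le> decay_peak n (Suc j) x"
proof -
  obtain y where y: "y \<le> x" "decay_peak n j x = real y * (1 - real y / real n) ^ j"
    using decay_peak_attained by blast
  have "1 - real x / real n \<le> 1 - real y / real n"
    using y(1) by (simp add: divide_right_mono)
  then have "(1 - real x / real n) * decay_peak n j x \<le> (1 - real y / real n) * decay_peak n j x"
    using decay_peak_nonneg by (simp add: mult_right_mono)
  also have "\<dots> = real y * (1 - real y / real n) ^ Suc j"
    using y(2) by simp
  also have "\<dots> \<le> decay_peak n (Suc j) x"
    using decay_peak_ge y(1) by blast
  finally show ?thesis .
qed

lemma mult_exp_minus_le: "(w::real) * exp (- w) \<le> exp (- 1)"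
proof -
  have "w * exp (- w) \<le> exp (w - 1) * exp (- w)"
    using exp_ge_add_one_self[of "w - 1"] by (intro mult_right_mono) auto
  also have "\<dots> = exp (- 1)" by (simp flip: exp_add)
  finally show ?thesis .
qed

lemma decay_peak_le:
  assumes "x \<le> n" "j \<ge> 1"
  shows "decay_peak n j x \<le> real n / (exp 1 * real j)"
proof -
  obtain y where y: "y \<le> x" "decay_peak n j x = real y * (1 - real y / real n) ^ j"
    using decay_peak_attained by blast
  define w where "w = real j * (real y / real n)"
  have "y \<le> n" using y(1) assms(1) by simp
  then have "(1 - real y / real n) ^ j = (1 - w / real j) ^ j"
    using assms(2) by (simp add: w_def)
  also have "\<dots> \<le> exp (- w)"
  proof (intro exp_ge_one_minus_x_over_n_power_n)
    have "real y / real n \<le> 1"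
      using \<open>y \<le> n\<close> by (cases "n = 0") auto
    then show "w \<le> real j" unfolding w_def using mult_left_le[of "real y / real n" "real j"] by simp
  qed (use assms(2) in auto)
  finally have "decay_peak n j x \<le> real y * exp (- w)"
    using y(2) by (simp add: mult_left_mono)
  also have "\<dots> = real n / real j * (w * exp (- w))"
    using assms \<open>y \<le> n\<close> by (cases "n = 0") (auto simp: w_def)
  also have "\<dots> \<le> real n / real j * exp (- 1)"
    by (intro mult_left_mono mult_exp_minus_le) auto
  finally show ?thesis by (simp add: exp_minus field_simps)
qed

lemma sum_average_transpose:
  fixes g :: "('a \<Rightarrow> 'b) \<Rightarrow> 'c::field_char_0"
  assumes "finite T" "T \<noteq> {}"
    and closed: "\<And>\<pi> s. \<pi> \<in> C \<Longrightarrow> s \<in> T \<Longrightarrow> \<pi> \<circ> Transposition.transpose a s \<in> C"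
  shows "(\<Sum>\<pi>\<in>C. g \<pi>) = (\<Sum>\<pi>\<in>C. \<Sum>s\<in>T. g (\<pi> \<circ> Transposition.transpose a s)) / of_nat (card T)"
proof -
  have "(\<Sum>\<pi>\<in>C. g (\<pi> \<circ> Transposition.transpose a s)) = (\<Sum>\<pi>\<in>C. g \<pi>)" if "s \<in> T" for s
  proof (rule sum.reindex_bij_betw)
    show "bij_betw (\<lambda>\<pi>. \<pi> \<circ> Transposition.transpose a s) C C"
      by (rule bij_betw_byWitness[where f' = "\<lambda>\<pi>. \<pi> \<circ> Transposition.transpose a s"])
         (use closed that in \<open>auto simp: comp_assoc\<close>)
  qed
  then have "(\<Sum>\<pi>\<in>C. \<Sum>s\<in>T. g (\<pi> \<circ> Transposition.transpose a s)) = of_nat (card T) * (\<Sum>\<pi>\<in>C. g \<pi>)"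
    by (subst sum.swap) simp
  then show ?thesis using assms(1,2) by simp
qed

lemma cond_pmf_of_set:
  assumes "finite A" "A \<inter> B \<noteq> {}"
  shows "cond_pmf (pmf_of_set A) B = pmf_of_set (A \<inter> B)"
proof (rule pmf_eqI)
  fix x
  have "A \<noteq> {}" "finite (A \<inter> B)" using assms by auto
  then show "pmf (cond_pmf (pmf_of_set A) B) x = pmf (pmf_of_set (A \<inter> B)) x"
    using assms by (simp add: pmf_cond measure_pmf_of_set card_gt_0_iff indicator_def)
qed

lemma diff_le_mult_one_minus_divide:
  assumes "0 \<le> x" "m \<le> n"
  shows "real m - x \<le> real m * (1 - x / real n)"
proof (cases "n = 0")
  case False
  have "real m * (x / real n) = x * (real m / real n)" by simp
  also have "\<dots> \<le> x" using assms False by (intro mult_left_le) auto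
  finally show ?thesis by (simp add: algebra_simps)
qed (use assms in simp)

lemma nat_floor_mult_le:
  assumes "0 \<le> \<beta>" "\<beta> \<le> 1"
  shows "nat \<lfloor>\<beta> * real n\<rfloor> \<le> n"
proof -
  have "real (nat \<lfloor>\<beta> * real n\<rfloor>) \<le> \<beta> * real n"
    using assms by (simp add: of_nat_floor)
  also have "\<dots> \<le> real n"
    using assms by (intro mult_left_le_one_le) auto
  finally show ?thesis by simp
qed

definition adjacent_alive :: "('a \<Rightarrow> 'a \<Rightarrow> bool) \<Rightarrow> nat \<Rightarrow> nat \<Rightarrow> nat \<Rightarrow> (nat \<Rightarrow> 'a) set" where
  "adjacent_alive E p1 p2 t =
     {\<pi>. E (\<pi> p1) (\<pi> p2) \<and> alive E \<pi> (t + 1) (\<pi> p1) \<and> alive E \<pi> (t + 1) (\<pi> p2)}"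

locale greedy_extensions =
  fixes V :: "'a set" and E :: "'a \<Rightarrow> 'a \<Rightarrow> bool" and n :: nat
    and S P :: "nat set" and \<sigma> :: "nat \<Rightarrow> 'a" and u :: 'a
  assumes graph: "simple_graph V E" and card_V: "card V = n"
    and S_sub: "S \<subseteq> {1..n}" and \<sigma>_inj: "inj_on \<sigma> S" and \<sigma>_V: "\<sigma> ` S \<subseteq> V"
    and P_sub: "P \<subseteq> {1..n}" and P_S_disjoint: "P \<inter> S = {}"
begin

definition extensions :: "(nat \<Rightarrow> 'a) set" where
  "extensions = bijections n V \<inter> {\<pi>. \<forall>i\<in>S. \<pi> i = \<sigma> i}"

definition free_after :: "nat \<Rightarrow> nat set" where
  "free_after k = {Suc k..n} - S"

definition live_neighbours :: "(nat \<Rightarrow> 'a) \<Rightarrow> nat \<Rightarrow> 'a set" where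
  "live_neighbours \<pi> k = {v. E u v \<and> v \<notin> greedy_dead E \<pi> k} \<inter> \<pi> ` free_after k"

definition remaining_steps :: "nat \<Rightarrow> nat" where
  "remaining_steps k = card {t\<in>P. k < t}"

definition potential :: "(nat \<Rightarrow> 'a) \<Rightarrow> nat \<Rightarrow> real" where
  "potential \<pi> k = (if u \<in> greedy_dead E \<pi> k then 0
     else decay_peak n (remaining_steps k) (card (live_neighbours \<pi> k)))"

lemma finite_V: "finite V"
  using graph unfolding simple_graph_def by blast

lemma E_sym: "E v w \<Longrightarrow> E w v"
  using graph unfolding simple_graph_def by blast

lemma finite_bijections: "finite (bijections n V)"
proof (rule finite_subset)
  show "bijections n V \<subseteq> {1..n} \<rightarrow>\<^sub>E V" unfolding bijections_def by blast
  show "finite ({1..n} \<rightarrow>\<^sub>E V)" using finite_V by (intro finite_PiE) auto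
qed

lemma finite_extensions: "finite extensions"
  using finite_bijections unfolding extensions_def by simp

lemma extensionsD:
  assumes "\<pi> \<in> extensions"
  shows "\<pi> \<in> {1..n} \<rightarrow>\<^sub>E V" "bij_betw \<pi> {1..n} V" "i \<in> S \<Longrightarrow> \<pi> i = \<sigma> i"
  using assms unfolding extensions_def bijections_def by auto

lemma extensions_nonempty: "extensions \<noteq> {}"
proof -
  define Q where "Q = {1..n} - S"
  define W where "W = V - \<sigma> ` S"
  have "finite S" using S_sub finite_subset by blast
  then have "card Q = card W"
    using S_sub \<sigma>_V finite_V card_V
    by (simp add: Q_def W_def card_Diff_subset card_image[OF \<sigma>_inj] finite_subset)
  moreover have "finite Q" "finite W" using finite_V unfolding Q_def W_def by auto
  ultimately obtain h where h: "bij_betw h Q W" using finite_same_card_bij by metis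
  define \<pi> where "\<pi> i = (if i \<in> S then \<sigma> i else if i \<in> Q then h i else undefined)" for i
  have "bij_betw \<pi> S (\<sigma> ` S)"
    using inj_on_imp_bij_betw[OF \<sigma>_inj] by (rule bij_betw_cong[THEN iffD1, rotated]) (simp add: \<pi>_def)
  moreover have "bij_betw \<pi> Q W"
    using h by (rule bij_betw_cong[THEN iffD1, rotated]) (auto simp: \<pi>_def Q_def)
  ultimately have "bij_betw \<pi> (S \<union> Q) (\<sigma> ` S \<union> W)"
    by (rule bij_betw_combine) (auto simp: W_def)
  moreover have "S \<union> Q = {1..n}" "\<sigma> ` S \<union> W = V"
    using S_sub \<sigma>_V unfolding Q_def W_def by auto
  ultimately have bij: "bij_betw \<pi> {1..n} V" by simp
  then have "\<pi> \<in> {1..n} \<rightarrow>\<^sub>E V"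
    using S_sub unfolding bij_betw_def by (auto simp: \<pi>_def Q_def PiE_def extensional_def)
  with bij have "\<pi> \<in> extensions" unfolding extensions_def bijections_def by (auto simp: \<pi>_def)
  then show ?thesis by blast
qed

lemma transpose_in_extensions:
  assumes "\<pi> \<in> extensions" "a \<in> {1..n} - S" "b \<in> {1..n} - S"
  shows "\<pi> \<circ> Transposition.transpose a b \<in> extensions"
proof -
  have bij: "bij_betw (\<pi> \<circ> Transposition.transpose a b) {1..n} V"
    using extensionsD(2)[OF assms(1)] assms(2,3) by (subst bij_betw_swap_iff) auto
  then have "\<pi> \<circ> Transposition.transpose a b \<in> {1..n} \<rightarrow>\<^sub>E V"
    using extensionsD(1)[OF assms(1)] assms(2,3)
    by (auto simp: PiE_def extensional_def dest: bij_betw_imp_funcset)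
  moreover have "\<forall>i\<in>S. (\<pi> \<circ> Transposition.transpose a b) i = \<sigma> i"
    using extensionsD(3)[OF assms(1)] assms(2,3) by (metis DiffD2 comp_apply transpose_apply_other)
  ultimately show ?thesis using bij unfolding extensions_def bijections_def by auto
qed

lemma free_after_subset: "free_after k \<subseteq> {1..n} - S"
  unfolding free_after_def by auto

lemma finite_free_after: "finite (free_after k)"
  unfolding free_after_def by auto

lemma card_free_after_le: "card (free_after k) \<le> n"
proof -
  have "card (free_after k) \<le> card {1..n}"
    using free_after_subset by (intro card_mono) auto
  then show ?thesis by simp
qed

lemma card_free_after_ge:
  assumes "S \<subseteq> {..m}" "k \<le> m"
  shows "n - m \<le> card (free_after k)"
proof -
  have "{Suc m..n} \<subseteq> free_after k"
    using assms by (auto simp: free_after_def)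
  from card_mono[OF finite_free_after this] show ?thesis by simp
qed

lemma finite_live_neighbours: "finite (live_neighbours \<pi> k)"
  unfolding live_neighbours_def using finite_free_after by auto

lemma card_live_neighbours_le: "card (live_neighbours \<pi> k) \<le> card (free_after k)"
proof -
  have "card (live_neighbours \<pi> k) \<le> card (\<pi> ` free_after k)"
    unfolding live_neighbours_def using finite_free_after by (intro card_mono) auto
  also have "\<dots> \<le> card (free_after k)" by (rule card_image_le[OF finite_free_after])
  finally show ?thesis .
qed

lemma card_live_neighbours_preimage:
  assumes "\<pi> \<in> extensions"
  shows "card {s\<in>free_after k. \<pi> s \<in> live_neighbours \<pi> k} = card (live_neighbours \<pi> k)"
proof -
  have "inj_on \<pi> (free_after k)"
    using extensionsD(2)[OF assms] free_after_subset
    unfolding bij_betw_def by (meson Diff_subset inj_on_subset subset_trans)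
  then have "inj_on \<pi> {s\<in>free_after k. \<pi> s \<in> live_neighbours \<pi> k}"
    by (rule inj_on_subset) auto
  moreover have "\<pi> ` {s\<in>free_after k. \<pi> s \<in> live_neighbours \<pi> k} = live_neighbours \<pi> k"
    unfolding live_neighbours_def by auto
  ultimately show ?thesis using card_image by metis
qed

lemma potential_nonneg: "0 \<le> potential \<pi> k"
  unfolding potential_def using decay_peak_nonneg by auto

lemma remaining_steps_Suc:
  "remaining_steps k = (if Suc k \<in> P then Suc (remaining_steps (Suc k)) else remaining_steps (Suc k))"
proof -
  have "finite {t\<in>P. Suc k < t}"
    by (rule finite_subset[of _ "{1..n}"]) (use P_sub in auto)
  moreover have "{t\<in>P. k < t} = (if Suc k \<in> P then insert (Suc k) {t\<in>P. Suc k < t} else {t\<in>P. Suc k < t})"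
    by (auto simp: Suc_le_eq dest: Suc_lessI)
  ultimately show ?thesis unfolding remaining_steps_def by simp
qed

lemma potential_Suc_le:
  assumes "Suc k \<notin> P"
  shows "potential \<pi> (Suc k) \<le> potential \<pi> k"
proof (cases "u \<in> greedy_dead E \<pi> (Suc k)")
  case True
  then show ?thesis using potential_nonneg by (simp add: potential_def)
next
  case False
  then have "u \<notin> greedy_dead E \<pi> k" using greedy_dead_subset_Suc[of E \<pi> k] by blast
  moreover have "live_neighbours \<pi> (Suc k) \<subseteq> live_neighbours \<pi> k"
    unfolding live_neighbours_def free_after_def using greedy_dead_subset_Suc[of E \<pi> k] by auto
  then have "card (live_neighbours \<pi> (Suc k)) \<le> card (live_neighbours \<pi> k)"
    by (intro card_mono finite_live_neighbours)
  ultimately show ?thesis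
    using False assms decay_peak_mono by (simp add: potential_def remaining_steps_Suc[of k])
qed

lemma potential_transpose_hit:
  assumes "s \<in> free_after k" "\<pi> s \<in> live_neighbours \<pi> k"
  shows "potential (\<pi> \<circ> Transposition.transpose (Suc k) s) (Suc k) = 0"
proof -
  let ?\<pi>' = "\<pi> \<circ> Transposition.transpose (Suc k) s"
  have "greedy_dead E ?\<pi>' k = greedy_dead E \<pi> k"
    using assms(1) by (intro greedy_dead_transpose) (auto simp: free_after_def)
  moreover have "E (\<pi> s) u" "\<pi> s \<notin> greedy_dead E \<pi> k"
    using assms(2) E_sym unfolding live_neighbours_def by auto
  ultimately have "u \<in> greedy_dead E ?\<pi>' (Suc k)" by simp
  then show ?thesis by (simp add: potential_def)
qed

lemma live_neighbours_transpose_subset: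
  assumes "Suc k \<in> free_after k" "s \<in> free_after k"
  shows "live_neighbours (\<pi> \<circ> Transposition.transpose (Suc k) s) (Suc k) \<subseteq> live_neighbours \<pi> k"
proof -
  let ?\<pi>' = "\<pi> \<circ> Transposition.transpose (Suc k) s"
  have "?\<pi>' ` free_after (Suc k) \<subseteq> ?\<pi>' ` free_after k"
    by (intro image_mono) (auto simp: free_after_def)
  also have "\<dots> = \<pi> ` Transposition.transpose (Suc k) s ` free_after k"
    by (rule image_comp[symmetric])
  also have "\<dots> = \<pi> ` free_after k"
    using assms by simp
  finally have "?\<pi>' ` free_after (Suc k) \<subseteq> \<pi> ` free_after k" .
  moreover have "greedy_dead E \<pi> k \<subseteq> greedy_dead E ?\<pi>' (Suc k)"
    using greedy_dead_transpose[of k "Suc k" s E \<pi>] greedy_dead_subset_Suc[of E ?\<pi>' k] assms(2)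
    by (auto simp: free_after_def)
  ultimately show ?thesis unfolding live_neighbours_def by blast
qed

lemma potential_transpose_le:
  assumes "Suc k \<in> P" "s \<in> free_after k"
  shows "potential (\<pi> \<circ> Transposition.transpose (Suc k) s) (Suc k)
           \<le> decay_peak n (remaining_steps (Suc k)) (card (live_neighbours \<pi> k))"
proof -
  have "Suc k \<in> free_after k" using assms(1) P_sub P_S_disjoint by (auto simp: free_after_def)
  then have "card (live_neighbours (\<pi> \<circ> Transposition.transpose (Suc k) s) (Suc k))
               \<le> card (live_neighbours \<pi> k)"
    using assms(2) by (intro card_mono finite_live_neighbours live_neighbours_transpose_subset)
  then show ?thesis by (simp add: potential_def decay_peak_nonneg decay_peak_mono)
qed

lemma sum_potential_transpose_le:
  assumes "\<pi> \<in> extensions" "Suc k \<in> P"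
  shows "(\<Sum>s\<in>free_after k. potential (\<pi> \<circ> Transposition.transpose (Suc k) s) (Suc k))
           \<le> real (card (free_after k)) * potential \<pi> k"
proof (cases "u \<in> greedy_dead E \<pi> k")
  case True
  have "potential (\<pi> \<circ> Transposition.transpose (Suc k) s) (Suc k) = 0" if "s \<in> free_after k" for s
    using True that greedy_dead_transpose[of k "Suc k" s E \<pi>]
      greedy_dead_subset_Suc[of E "\<pi> \<circ> Transposition.transpose (Suc k) s" k]
    by (auto simp: potential_def free_after_def)
  then show ?thesis using potential_nonneg[of \<pi> k] by simp
next
  case False
  define F where "F = free_after k"
  define H where "H = {s\<in>F. \<pi> s \<in> live_neighbours \<pi> k}"
  define a where "a = card (live_neighbours \<pi> k)"
  define j where "j = remaining_steps (Suc k)"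
  have "H \<subseteq> F" "finite F" by (auto simp: H_def F_def finite_free_after)
  have "card H = a" unfolding H_def F_def a_def by (rule card_live_neighbours_preimage[OF assms(1)])
  have "card F \<le> n" unfolding F_def by (rule card_free_after_le)
  have "a \<le> card F" using \<open>H \<subseteq> F\<close> \<open>finite F\<close> \<open>card H = a\<close> card_mono by blast
  have "(\<Sum>s\<in>F. potential (\<pi> \<circ> Transposition.transpose (Suc k) s) (Suc k))
      = (\<Sum>s\<in>F - H. potential (\<pi> \<circ> Transposition.transpose (Suc k) s) (Suc k))"
    using \<open>H \<subseteq> F\<close> \<open>finite F\<close> potential_transpose_hit
    by (intro sum.mono_neutral_right) (auto simp: H_def F_def)
  also have "\<dots> \<le> (\<Sum>s\<in>F - H. decay_peak n j a)"
    using potential_transpose_le[OF assms(2)] by (intro sum_mono) (auto simp: F_def j_def a_def)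
  also have "\<dots> = (real (card F) - real a) * decay_peak n j a"
    using \<open>H \<subseteq> F\<close> \<open>finite F\<close> \<open>card H = a\<close> \<open>a \<le> card F\<close>
    by (simp add: card_Diff_subset finite_subset of_nat_diff)
  \<comment> \<open>the probability \<open>a / card F\<close> of hitting an alive neighbour is at least \<open>a / n\<close>\<close>
  also have "\<dots> \<le> real (card F) * ((1 - real a / real n) * decay_peak n j a)"
    using diff_le_mult_one_minus_divide[OF _ \<open>card F \<le> n\<close>, of "real a"]
    by (simp add: mult_right_mono decay_peak_nonneg flip: mult.assoc)
  also have "\<dots> \<le> real (card F) * decay_peak n (Suc j) a"
    using card_live_neighbours_le[of \<pi> k] \<open>card F \<le> n\<close>
    by (intro mult_left_mono decay_peak_Suc) (auto simp: a_def F_def)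
  also have "\<dots> = real (card F) * potential \<pi> k"
    using False assms(2) by (simp add: potential_def a_def j_def remaining_steps_Suc[of k])
  finally show ?thesis unfolding F_def .
qed

lemma sum_potential_Suc_le:
  "(\<Sum>\<pi>\<in>extensions. potential \<pi> (Suc k)) \<le> (\<Sum>\<pi>\<in>extensions. potential \<pi> k)"
proof (cases "Suc k \<in> P")
  case True
  then have "Suc k \<in> free_after k" using P_sub P_S_disjoint by (auto simp: free_after_def)
  then have "(\<Sum>\<pi>\<in>extensions. potential \<pi> (Suc k))
      = (\<Sum>\<pi>\<in>extensions. \<Sum>s\<in>free_after k. potential (\<pi> \<circ> Transposition.transpose (Suc k) s) (Suc k))
        / real (card (free_after k))"
    by (intro sum_average_transpose finite_free_after)
      (auto intro!: transpose_in_extensions simp: free_after_def)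
  also have "\<dots> \<le> (\<Sum>\<pi>\<in>extensions. real (card (free_after k)) * potential \<pi> k) / real (card (free_after k))"
    using True by (intro divide_right_mono sum_mono sum_potential_transpose_le) auto
  also have "\<dots> = (\<Sum>\<pi>\<in>extensions. potential \<pi> k)"
    using \<open>Suc k \<in> free_after k\<close> finite_free_after[of k]
    by (auto simp: sum_distrib_left[symmetric] card_gt_0_iff)
  finally show ?thesis .
next
  case False
  then show ?thesis by (intro sum_mono potential_Suc_le)
qed

lemma sum_potential_le_initial:
  "(\<Sum>\<pi>\<in>extensions. potential \<pi> k) \<le> (\<Sum>\<pi>\<in>extensions. potential \<pi> 0)"
  by (induction k) (auto intro: order_trans[OF sum_potential_Suc_le])

lemma potential_initial_le:
  assumes "P \<noteq> {}"
  shows "potential \<pi> 0 \<le> real n / (exp 1 * real (card P))"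
proof -
  have "{t\<in>P. 0 < t} = P" using P_sub by auto
  then have "remaining_steps 0 = card P" unfolding remaining_steps_def by simp
  moreover have "card P \<ge> 1"
    using assms P_sub by (simp add: Suc_le_eq card_gt_0_iff finite_subset)
  moreover have "card (live_neighbours \<pi> 0) \<le> n"
    using card_live_neighbours_le card_free_after_le order_trans by blast
  ultimately show ?thesis by (simp add: potential_def decay_peak_le)
qed

lemma card_transpose_adjacent_alive_le:
  assumes "\<pi> \<in> extensions" "p1 \<in> S" "\<sigma> p1 = u" "p2 \<in> free_after t" "P \<subseteq> {..t}"
  shows "real (card {s\<in>free_after t. \<pi> \<circ> Transposition.transpose p2 s \<in> adjacent_alive E p1 p2 t})
           \<le> potential \<pi> t"
proof -
  let ?H = "if u \<in> greedy_dead E \<pi> t then {} else {s\<in>free_after t. \<pi> s \<in> live_neighbours \<pi> t}"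
  have "{s\<in>free_after t. \<pi> \<circ> Transposition.transpose p2 s \<in> adjacent_alive E p1 p2 t} \<subseteq> ?H"
  proof safe
    fix s
    assume s: "s \<in> free_after t" and adj: "\<pi> \<circ> Transposition.transpose p2 s \<in> adjacent_alive E p1 p2 t"
    have "greedy_dead E (\<pi> \<circ> Transposition.transpose p2 s) t = greedy_dead E \<pi> t"
      using s assms(4) by (intro greedy_dead_transpose) (auto simp: free_after_def)
    moreover have "p1 \<noteq> p2" "p1 \<noteq> s" using assms(2,4) s by (auto simp: free_after_def)
    then have "(\<pi> \<circ> Transposition.transpose p2 s) p1 = u"
      using extensionsD(3)[OF assms(1,2)] assms(3) by simp
    ultimately have "E u (\<pi> s)" "u \<notin> greedy_dead E \<pi> t" "\<pi> s \<notin> greedy_dead E \<pi> t"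
      using adj unfolding adjacent_alive_def alive_def by auto
    then show "s \<in> ?H" using s by (auto simp: live_neighbours_def)
  qed
  then have "card {s\<in>free_after t. \<pi> \<circ> Transposition.transpose p2 s \<in> adjacent_alive E p1 p2 t}
      \<le> card ?H"
    using finite_free_after by (intro card_mono) auto
  moreover have "remaining_steps t = 0"
  proof -
    have "{t'\<in>P. t < t'} = {}" using assms(5) by auto
    then show ?thesis unfolding remaining_steps_def by (metis card.empty)
  qed
  ultimately show ?thesis
    using card_live_neighbours_preimage[OF assms(1)] by (auto simp: potential_def)
qed

lemma card_adjacent_alive_le:
  assumes "p1 \<in> S" "\<sigma> p1 = u" "p2 \<in> free_after t" "P \<subseteq> {..t}"
  shows "real (card (extensions \<inter> adjacent_alive E p1 p2 t))
           \<le> (\<Sum>\<pi>\<in>extensions. potential \<pi> t) / real (card (free_after t))"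
proof -
  have "real (card (extensions \<inter> adjacent_alive E p1 p2 t))
      = (\<Sum>\<pi>\<in>extensions. of_bool (\<pi> \<in> adjacent_alive E p1 p2 t))"
    using finite_extensions by (simp add: Int_def)
  also have "\<dots> = (\<Sum>\<pi>\<in>extensions. \<Sum>s\<in>free_after t.
      of_bool (\<pi> \<circ> Transposition.transpose p2 s \<in> adjacent_alive E p1 p2 t)) / real (card (free_after t))"
    using assms(3)
    by (intro sum_average_transpose finite_free_after)
      (auto intro!: transpose_in_extensions simp: free_after_def)
  also have "\<dots> \<le> (\<Sum>\<pi>\<in>extensions. potential \<pi> t) / real (card (free_after t))"
    using card_transpose_adjacent_alive_le[OF _ assms] finite_free_after
    by (intro divide_right_mono sum_mono) (auto simp: Int_def)
  finally show ?thesis .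
qed

theorem prob_adjacent_alive_le:
  assumes "p1 \<in> S" "\<sigma> p1 = u" "p2 \<in> free_after t" "P \<subseteq> {..t}" "P \<noteq> {}"
  shows "measure_pmf.prob (cond_pmf (pmf_of_set (bijections n V)) {\<pi>. \<forall>i\<in>S. \<pi> i = \<sigma> i})
           (adjacent_alive E p1 p2 t)
         \<le> real n / (exp 1 * real (card P) * real (card (free_after t)))"
proof -
  let ?c = "real n / (exp 1 * real (card P))"
  let ?A = "adjacent_alive E p1 p2 t"
  have "card extensions > 0"
    using extensions_nonempty finite_extensions by (simp add: card_gt_0_iff)
  have cond: "cond_pmf (pmf_of_set (bijections n V)) {\<pi>. \<forall>i\<in>S. \<pi> i = \<sigma> i} = pmf_of_set extensions"
    unfolding extensions_def using extensions_nonempty[unfolded extensions_def]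
    by (intro cond_pmf_of_set finite_bijections)
  have sum_le: "(\<Sum>\<pi>\<in>extensions. potential \<pi> t) \<le> real (card extensions) * ?c"
  proof -
    have "(\<Sum>\<pi>\<in>extensions. potential \<pi> t) \<le> (\<Sum>\<pi>\<in>extensions. potential \<pi> 0)"
      by (rule sum_potential_le_initial)
    also have "\<dots> \<le> (\<Sum>\<pi>\<in>extensions. ?c)"
      by (intro sum_mono potential_initial_le assms(5))
    finally show ?thesis by simp
  qed
  have bound: "real (card (extensions \<inter> ?A)) \<le> real (card extensions) * ?c / real (card (free_after t))"
    using card_adjacent_alive_le[OF assms(1-4)] divide_right_mono[OF sum_le of_nat_0_le_iff]
    by (rule order_trans)
  have "measure_pmf.prob (cond_pmf (pmf_of_set (bijections n V)) {\<pi>. \<forall>i\<in>S. \<pi> i = \<sigma> i}) ?A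
      = real (card (extensions \<inter> ?A)) / real (card extensions)"
    using finite_extensions extensions_nonempty by (simp add: cond measure_pmf_of_set)
  also have "\<dots> \<le> real (card extensions) * ?c / real (card (free_after t)) / real (card extensions)"
    using bound by (rule divide_right_mono) simp
  also have "\<dots> = real n / (exp 1 * real (card P) * real (card (free_after t)))"
    using \<open>card extensions > 0\<close> by simp
  finally show ?thesis .
qed

end

theorem mainTheorem5:
  fixes \<beta> :: real and V :: "'a set" and E :: "'a \<Rightarrow> 'a \<Rightarrow> bool" and n l :: nat
    and P1 S :: "nat set" and p1 p2 :: nat and \<sigma> :: "nat \<Rightarrow> 'a"
  assumes beta: "0 < \<beta>" "\<beta> < 1"
    and G: "simple_graph V E" and nV: "card V = n"
    and P1: "P1 \<subseteq> {1..nat \<lfloor>\<beta> * real n\<rfloor>}" "card P1 = l" "l \<ge> 1"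
    and p: "p1 \<in> {1..nat \<lfloor>\<beta> * real n\<rfloor>} - P1" "p2 \<in> {1..nat \<lfloor>\<beta> * real n\<rfloor>} - P1"
      "p1 < p2" "Max P1 < p1"
    and S: "S \<subseteq> {1..nat \<lfloor>\<beta> * real n\<rfloor>} - (P1 \<union> {p2})" "p1 \<in> S"
    and \<sigma>: "inj_on \<sigma> S" "\<sigma> ` S \<subseteq> V"
  shows "measure_pmf.prob
           (cond_pmf (pmf_of_set (bijections n V)) {\<pi>. \<forall>i\<in>S. \<pi> i = \<sigma> i})
           {\<pi>. E (\<pi> p1) (\<pi> p2) \<and> alive E \<pi> (Max P1 + 1) (\<pi> p1) \<and> alive E \<pi> (Max P1 + 1) (\<pi> p2)}
         \<le> 1 / (exp 1 * real l * (1 - \<beta>))"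
proof -
  define K where "K = nat \<lfloor>\<beta> * real n\<rfloor>"
  have K: "real K \<le> \<beta> * real n" "K \<le> n"
    using beta nat_floor_mult_le[of \<beta> n] unfolding K_def by (simp_all add: of_nat_floor)
  have "n > 0" using p(1) K(2) unfolding K_def by auto
  interpret greedy_extensions V E n S P1 \<sigma> "\<sigma> p1"
    using G nV S \<sigma> P1(1) K(2) unfolding K_def by unfold_locales auto
  have "P1 \<noteq> {}" "finite P1" using P1 finite_subset by auto
  then have P1_le: "P1 \<subseteq> {..Max P1}" and "Max P1 \<le> K"
    using P1(1) unfolding K_def by auto
  then have "n - K \<le> card (free_after (Max P1))"
    using S(1) unfolding K_def by (intro card_free_after_ge) auto
  then have free: "(1 - \<beta>) * real n \<le> real (card (free_after (Max P1)))"
    using K by (simp add: of_nat_diff algebra_simps)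
  moreover have "0 < (1 - \<beta>) * real n" using beta \<open>n > 0\<close> by simp
  ultimately have free_pos: "0 < real (card (free_after (Max P1)))" by linarith
  have "p2 \<in> free_after (Max P1)"
    using p S(1) K(2) unfolding K_def free_after_def by auto
  then have "measure_pmf.prob (cond_pmf (pmf_of_set (bijections n V)) {\<pi>. \<forall>i\<in>S. \<pi> i = \<sigma> i})
      (adjacent_alive E p1 p2 (Max P1)) \<le> real n / (exp 1 * real l * real (card (free_after (Max P1))))"
    using prob_adjacent_alive_le[OF S(2) refl _ P1_le \<open>P1 \<noteq> {}\<close>] P1(2) by simp
  also have "\<dots> \<le> real n / (exp 1 * real l * ((1 - \<beta>) * real n))"
    using free free_pos beta \<open>n > 0\<close> P1(3) by (intro divide_left_mono mult_left_mono mult_pos_pos) auto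
  also have "\<dots> = 1 / (exp 1 * real l * (1 - \<beta>))"
    using \<open>n > 0\<close> by simp
  finally show ?thesis unfolding adjacent_alive_def .
qed

end
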